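(* Let $q>0$, $x\ge0$, $0<y<1$, and $p>1$. Define $$c_{p,q}=\frac{p+q-1}{p}\,y\,\frac{M(p+q,p+1,xy/2)}{M(p+q-1,p,xy/2)}.$$ Then both $y_k=B_{k,q}(x,y)$ and $y_k=\bar B_{k,q}(x,y)$ satisfy $$y_{p+1}-(1+c_{p,q})\,y_p+c_{p,q}\,y_{p-1}=0 .$$
   Context: For $p,q>0$ and $0\le y\le 1$, $I_y(p,q)=\frac{1}{B(p,q)}\int_0^y t^{p-1}(1-t)^{q-1}\,dt$ is the regularized incomplete beta function, with $B(p,q)=\Gamma(p)\Gamma(q)/\Gamma(p+q)$. The cumulative noncentral beta distribution is $B_{p,q}(x,y)=e^{-x/2}\sum_{j=0}^\infty \frac{1}{j!}\left(\frac x2\right)^j I_y(p+j,q)$ for $x\ge0$, and its complement is $\bar B_{p,q}(x,y)=1-B_{p,q}(x,y)$. $M(a,b,z)=\sum_{n\ge0}\frac{(a)_n}{(b)_n}\frac{z^n}{n!}$ is Kummer's confluent hypergeometric function, and $(a)_n$ is the Pochhammer symbol. *)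

theory Defs
  imports "HOL-Analysis.Analysis"
begin

text \<open>Regularized incomplete beta function I_y(p,q) (Henstock-Kurzweil integral; the
  integrand is absolutely integrable on [0,y] for p,q>0 and 0 \<le> y \<le> 1).\<close>
definition inc_beta :: "real \<Rightarrow> real \<Rightarrow> real \<Rightarrow> real" where
  "inc_beta y p q =
     integral {0..y} (\<lambda>t. t powr (p - 1) * (1 - t) powr (q - 1)) / Beta p q"

definition nc_beta :: "real \<Rightarrow> real \<Rightarrow> real \<Rightarrow> real \<Rightarrow> real" where
  "nc_beta p q x y =
     exp (- x / 2) * (\<Sum>j. (1 / fact j) * (x / 2) ^ j * inc_beta y (p + real j) q)"

definition nc_beta_compl :: "real \<Rightarrow> real \<Rightarrow> real \<Rightarrow> real \<Rightarrow> real" where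
  "nc_beta_compl p q x y = 1 - nc_beta p q x y"

definition kummerM :: "real \<Rightarrow> real \<Rightarrow> real \<Rightarrow> real" where
  "kummerM a b z = (\<Sum>n. pochhammer a n / pochhammer b n * z ^ n / fact n)"

end

theory Submission imports Defs begin

text \<open>Integration by parts against \<open>t^p (1-t)^q\<close> gives
  \<open>I_y(p,q) - I_y(p+1,q) = y^p (1-y)^q / (p B(p,q))\<close>, and since these gaps satisfy
  \<open>gap(p+1) = (p+q)/(p+1) y gap(p)\<close>, the gap at \<open>p+j\<close> is \<open>gap(p) (p+q)_j/(p+1)_j y^j\<close>.
  Summing against the Poisson weights turns \<open>e^(x/2) (B_(p,q) - B_(p+1,q))\<close> into
  \<open>gap(p) M(p+q,p+1,xy/2)\<close>. With \<open>gap(p) = (p+q-1)/p y gap(p-1)\<close> the definition of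
  \<open>c_(p,q)\<close> says exactly \<open>c_(p,q) (B_(p-1,q) - B_(p,q)) = B_(p,q) - B_(p+1,q)\<close>, which is the
  recurrence; its coefficients sum to zero, so the complement satisfies it as well.\<close>

definition inc_beta_gap :: "real \<Rightarrow> real \<Rightarrow> real \<Rightarrow> real" where
  "inc_beta_gap y p q = y powr p * (1 - y) powr q / (p * Beta p q)"

definition nc_beta_sum :: "real \<Rightarrow> real \<Rightarrow> real \<Rightarrow> real \<Rightarrow> real" where
  "nc_beta_sum p q x y = (\<Sum>j. 1 / fact j * (x / 2) ^ j * inc_beta y (p + real j) q)"

definition kummer_term :: "real \<Rightarrow> real \<Rightarrow> real \<Rightarrow> nat \<Rightarrow> real" where
  "kummer_term a b z n = pochhammer a n / pochhammer b n * z ^ n / fact n"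

lemma nc_beta_eq_sum: "nc_beta p q x y = exp (- x / 2) * nc_beta_sum p q x y"
  by (simp add: nc_beta_def nc_beta_sum_def)

lemma kummerM_eq_suminf: "kummerM a b z = suminf (kummer_term a b z)"
  unfolding kummerM_def kummer_term_def ..

lemma Beta_real_pos: "a > 0 \<Longrightarrow> b > 0 \<Longrightarrow> Beta a (b::real) > 0"
  by (simp add: Beta_def)

lemma Beta_real_plus1_left:
  fixes a b :: real
  assumes "a > 0" "b > 0"
  shows "Beta (a + 1) b = a / (a + b) * Beta a b"
proof -
  have "a \<notin> \<int>\<^sub>\<le>\<^sub>0" using \<open>a > 0\<close> by (auto elim!: nonpos_Ints_cases)
  from Beta_plus1_left[OF this, of b] assms show ?thesis
    by (simp add: field_simps)
qed

lemma inc_beta_gap_pos: "p > 0 \<Longrightarrow> q > 0 \<Longrightarrow> 0 < y \<Longrightarrow> y < 1 \<Longrightarrow> inc_beta_gap y p q > 0"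
  by (simp add: inc_beta_gap_def Beta_real_pos)

lemma inc_beta_gap_plus1:
  fixes p q y :: real
  assumes "p > 0" "q > 0" "0 < y"
  shows "inc_beta_gap y (p + 1) q = (p + q) / (p + 1) * y * inc_beta_gap y p q"
proof -
  have "y powr (p + 1) = y powr p * y" using \<open>0 < y\<close> by (simp add: powr_add)
  with Beta_real_pos[OF assms(1,2)] assms show ?thesis
    unfolding inc_beta_gap_def Beta_real_plus1_left[OF assms(1,2)] by (simp add: field_simps)
qed

lemma beta_integrand_parts_has_integral:
  fixes p q y :: real
  assumes p: "p > 0" and "0 < y" and y1: "y < 1"
  shows "((\<lambda>t. t powr (p - 1) * (1 - t) powr (q - 1) - (p + q) / p * (t powr p * (1 - t) powr (q - 1)))
           has_integral y powr p * (1 - y) powr q / p) {0..y}"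
proof -
  define F where "F = (\<lambda>t::real. t powr p * (1 - t) powr q / p)"
  have "(F has_vector_derivative
          t powr (p - 1) * (1 - t) powr (q - 1) - (p + q) / p * (t powr p * (1 - t) powr (q - 1)))
          (at t)" if "t \<in> {0<..<y}" for t
  proof -
    from that y1 have t0: "t > 0" and t1: "1 - t > 0" by auto
    have "(F has_real_derivative
        (p * t powr (p - 1) * (1 - t) powr q - q * t powr p * (1 - t) powr (q - 1)) / p) (at t)"
      unfolding F_def using t0 t1 p by (auto intro!: derivative_eq_intros)
    moreover
    have e: "t powr (p - 1) = t powr p / t" "(1 - t) powr (q - 1) = (1 - t) powr q / (1 - t)"
      using t0 t1 by (simp_all add: powr_diff)
    have "(p * t powr (p - 1) * (1 - t) powr q - q * t powr p * (1 - t) powr (q - 1)) / p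
        = t powr (p - 1) * (1 - t) powr (q - 1) - (p + q) / p * (t powr p * (1 - t) powr (q - 1))"
      unfolding e using t0 t1 p by (simp add: divide_simps) algebra
    ultimately show ?thesis by (simp add: has_real_derivative_iff_has_vector_derivative)
  qed
  moreover have "continuous_on {0..y} F"
    unfolding F_def using p y1 by (intro continuous_intros continuous_on_powr') auto
  ultimately show ?thesis
    using fundamental_theorem_of_calculus_interior[of 0 y F] \<open>0 < y\<close> p by (simp add: F_def)
qed

lemma beta_integrand_integrable:
  fixes p q y :: real
  assumes p: "p > 0" and "0 < y" and y1: "y < 1"
  shows "(\<lambda>t. t powr (p - 1) * (1 - t) powr (q - 1)) integrable_on {0..y}"
proof -
  define g where "g = (\<lambda>t::real. (p + q) / p * (t powr p * (1 - t) powr (q - 1)))"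
  have "continuous_on {0..y} g"
    unfolding g_def using p y1 by (intro continuous_intros continuous_on_powr') auto
  then have "g integrable_on {0..y}" by (rule integrable_continuous_interval)
  with beta_integrand_parts_has_integral[OF assms, of q]
  have "(\<lambda>t. (t powr (p - 1) * (1 - t) powr (q - 1) - g t) + g t) integrable_on {0..y}"
    unfolding g_def by (intro integrable_add) auto
  then show ?thesis by simp
qed

lemma inc_beta_diff_plus1:
  fixes p q y :: real
  assumes p: "p > 0" and q: "q > 0" and "0 < y" and "y < 1"
  shows "inc_beta y p q - inc_beta y (p + 1) q = inc_beta_gap y p q"
proof -
  let ?f = "\<lambda>t. t powr (p - 1) * (1 - t) powr (q - 1)"
  let ?g = "\<lambda>t. t powr p * (1 - t) powr (q - 1)"
  have "?g integrable_on {0..y}"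
    using beta_integrand_integrable[of "p + 1" y q] assms by simp
  then have "(\<lambda>t. (p + q) / p * ?g t) integrable_on {0..y}"
    using integrable_on_cmult_left[of ?g _ "(p + q) / p"] by simp
  with beta_integrand_integrable[OF p \<open>0 < y\<close> \<open>y < 1\<close>, of q]
  have "integral {0..y} (\<lambda>t. ?f t - (p + q) / p * ?g t)
      = integral {0..y} ?f - (p + q) / p * integral {0..y} ?g"
    by (subst integral_diff) simp_all
  moreover have "integral {0..y} (\<lambda>t. ?f t - (p + q) / p * ?g t) = y powr p * (1 - y) powr q / p"
    using beta_integrand_parts_has_integral[OF p \<open>0 < y\<close> \<open>y < 1\<close>, of q]
    by (rule integral_unique)
  ultimately have "integral {0..y} ?f - (p + q) / p * integral {0..y} ?g
      = y powr p * (1 - y) powr q / p" by simp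
  with Beta_real_pos[OF p q] p q show ?thesis
    unfolding inc_beta_def inc_beta_gap_def Beta_real_plus1_left[OF p q] by (simp add: field_simps)
qed

lemma inc_beta_nonneg:
  fixes p q y :: real
  assumes "p > 0" "q > 0" "0 < y" "y < 1"
  shows "0 \<le> inc_beta y p q"
proof -
  have "0 \<le> integral {0..y} (\<lambda>t. t powr (p - 1) * (1 - t) powr (q - 1))"
    using beta_integrand_integrable[of p y q] assms by (intro integral_nonneg) auto
  with Beta_real_pos[of p q] assms show ?thesis unfolding inc_beta_def by simp
qed

lemma inc_beta_shift_le:
  fixes p q y :: real
  assumes "p > 0" "q > 0" "0 < y" "y < 1"
  shows "inc_beta y (p + real j) q \<le> inc_beta y p q"
proof (induction j)
  case (Suc j)
  have "inc_beta y (p + real j) q - inc_beta y (p + real (Suc j)) q = inc_beta_gap y (p + real j) q"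
    using inc_beta_diff_plus1[of "p + real j" q y] assms by (simp add: ac_simps)
  moreover have "inc_beta_gap y (p + real j) q > 0"
    using assms by (intro inc_beta_gap_pos) auto
  ultimately show ?case using Suc by linarith
qed simp

lemma summable_nc_beta_terms:
  fixes p q x y :: real
  assumes "p > 0" "q > 0" "0 < y" "y < 1" "x \<ge> 0"
  shows "summable (\<lambda>j. 1 / fact j * (x / 2) ^ j * inc_beta y (p + real j) q)"
proof (rule summable_comparison_test)
  show "summable (\<lambda>j. inc_beta y p q * (inverse (fact j) * (x / 2) ^ j))"
    using summable_exp[of "x / 2"] by simp
  show "\<exists>N. \<forall>j\<ge>N. norm (1 / fact j * (x / 2) ^ j * inc_beta y (p + real j) q)
      \<le> inc_beta y p q * (inverse (fact j) * (x / 2) ^ j)"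
  proof (intro exI allI impI)
    fix j :: nat
    have "0 \<le> inc_beta y (p + real j) q"
      using assms by (intro inc_beta_nonneg) auto
    with inc_beta_shift_le[OF assms(1-4), of j] \<open>x \<ge> 0\<close>
    show "norm (1 / fact j * (x / 2) ^ j * inc_beta y (p + real j) q)
        \<le> inc_beta y p q * (inverse (fact j) * (x / 2) ^ j)"
      by (simp add: abs_mult field_simps mult_left_mono)
  qed
qed

lemma inc_beta_gap_shift:
  fixes r q y :: real
  assumes "r > 0" "q > 0" "0 < y"
  shows "inc_beta_gap y (r + real j) q
           = inc_beta_gap y r q * pochhammer (r + q) j / pochhammer (r + 1) j * y ^ j"
proof (induction j)
  case (Suc j)
  have "inc_beta_gap y (r + real j + 1) q
          = (r + real j + q) / (r + real j + 1) * y * inc_beta_gap y (r + real j) q"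
    using assms by (intro inc_beta_gap_plus1) auto
  moreover have "pochhammer (r + 1) j > 0" using pochhammer_pos[of "r + 1" j] assms by simp
  ultimately show ?case
    using Suc assms by (simp add: pochhammer_Suc add_ac field_simps)
qed simp

lemma nc_beta_sum_diff_sums:
  fixes r q x y :: real
  assumes "r > 0" "q > 0" "0 < y" "y < 1" "x \<ge> 0"
  shows "(\<lambda>j. inc_beta_gap y r q * kummer_term (r + q) (r + 1) (x * y / 2) j)
           sums (nc_beta_sum r q x y - nc_beta_sum (r + 1) q x y)"
proof -
  have "(\<lambda>j. 1 / fact j * (x / 2) ^ j * inc_beta y (r + real j) q
            - 1 / fact j * (x / 2) ^ j * inc_beta y (r + 1 + real j) q)
          sums (nc_beta_sum r q x y - nc_beta_sum (r + 1) q x y)"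
    unfolding nc_beta_sum_def using assms
    by (intro sums_diff summable_sums summable_nc_beta_terms) auto
  moreover have "1 / fact j * (x / 2) ^ j * inc_beta y (r + real j) q
                   - 1 / fact j * (x / 2) ^ j * inc_beta y (r + 1 + real j) q
                 = inc_beta_gap y r q * kummer_term (r + q) (r + 1) (x * y / 2) j" for j
  proof -
    have "inc_beta y (r + real j) q - inc_beta y (r + 1 + real j) q = inc_beta_gap y (r + real j) q"
      using inc_beta_diff_plus1[of "r + real j" q y] assms by (simp add: add_ac)
    with inc_beta_gap_shift[of r q y j] assms show ?thesis
      by (simp add: kummer_term_def right_diff_distrib[symmetric] power_mult_distrib field_simps)
  qed
  ultimately show ?thesis by simp
qed

lemma nc_beta_sum_diff:
  fixes r q x y :: real
  assumes "r > 0" "q > 0" "0 < y" "y < 1" "x \<ge> 0"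
  shows "summable (kummer_term (r + q) (r + 1) (x * y / 2))"
    and "nc_beta_sum r q x y - nc_beta_sum (r + 1) q x y
           = inc_beta_gap y r q * kummerM (r + q) (r + 1) (x * y / 2)"
proof -
  note sums = nc_beta_sum_diff_sums[OF assms]
  moreover have "inc_beta_gap y r q \<noteq> 0"
    using inc_beta_gap_pos[of r q y] assms by simp
  ultimately show summable: "summable (kummer_term (r + q) (r + 1) (x * y / 2))"
    using sums_summable summable_cmult_iff by blast
  from sums show "nc_beta_sum r q x y - nc_beta_sum (r + 1) q x y
      = inc_beta_gap y r q * kummerM (r + q) (r + 1) (x * y / 2)"
    unfolding kummerM_eq_suminf suminf_mult[OF summable, symmetric] by (rule sums_unique)
qed

lemma kummerM_pos:
  fixes a b z :: real
  assumes "a > 0" "b > 0" "z \<ge> 0" "summable (kummer_term a b z)"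
  shows "kummerM a b z > 0"
  unfolding kummerM_eq_suminf
proof (rule suminf_pos2[OF assms(4), of 0])
  show "0 \<le> kummer_term a b z j" for j
    using pochhammer_pos[of a j] pochhammer_pos[of b j] assms by (simp add: kummer_term_def)
qed (simp add: kummer_term_def)

theorem mainTheorem5:
  fixes p q x y :: real
  assumes "q > 0" and "x \<ge> 0" and "0 < y" and "y < 1" and "p > 1"
  defines "c \<equiv> (p + q - 1) / p * y * kummerM (p + q) (p + 1) (x * y / 2)
                  / kummerM (p + q - 1) p (x * y / 2)"
  shows "nc_beta (p + 1) q x y - (1 + c) * nc_beta p q x y + c * nc_beta (p - 1) q x y = 0
       \<and> nc_beta_compl (p + 1) q x y - (1 + c) * nc_beta_compl p q x y
           + c * nc_beta_compl (p - 1) q x y = 0"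
proof -
  define S where "S r = nc_beta_sum r q x y" for r
  define M1 where "M1 = kummerM (p + q) (p + 1) (x * y / 2)"
  define M0 where "M0 = kummerM (p + q - 1) p (x * y / 2)"
  have "p > 0" "p - 1 > 0" using \<open>p > 1\<close> by auto
  note diff0 = nc_beta_sum_diff[OF \<open>p - 1 > 0\<close> assms(1,3,4,2)]
  have D1: "S p - S (p + 1) = inc_beta_gap y p q * M1"
    using nc_beta_sum_diff(2)[OF \<open>p > 0\<close> assms(1,3,4,2)] by (simp add: S_def M1_def)
  have D0: "S (p - 1) - S p = inc_beta_gap y (p - 1) q * M0"
    using diff0(2) by (simp add: S_def M0_def diff_add_eq)
  have "M0 > 0"
    using diff0(1) assms \<open>p - 1 > 0\<close> unfolding M0_def by (intro kummerM_pos) (auto simp: diff_add_eq)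
  have "inc_beta_gap y p q = (p + q - 1) / p * y * inc_beta_gap y (p - 1) q"
    using inc_beta_gap_plus1[OF \<open>p - 1 > 0\<close> \<open>q > 0\<close> \<open>0 < y\<close>] by simp
  with D0 D1 \<open>M0 > 0\<close> have "c * (S (p - 1) - S p) = S p - S (p + 1)"
    unfolding c_def M0_def[symmetric] M1_def[symmetric] by simp
  then show ?thesis
    unfolding nc_beta_compl_def nc_beta_eq_sum S_def[symmetric] by algebra
qed

end
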